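(* For all probability measures $P,Q$ and $\omega\in(0,1)$, with relative entropies in nats: (i) $\mathcal{I}_\omega(P\|Q)\le \omega-\frac12+\sqrt{\frac14-\frac{\omega(1-\omega)}{1+\omega\chi^2(P\|Q)}}$ for $\omega\in(0,\frac12]$, and $\mathcal{I}_\omega(P\|Q)\le\frac12-\omega+\sqrt{\frac14-\frac{\omega(1-\omega)}{1+\omega\chi^2(Q\|P)}}$ for $\omega\in(\frac12,1)$; (ii) $\mathcal{I}_\omega(P\|Q)\le\omega\,c_{(1-\omega)/\omega}\,D(P\|Q)$ for $\omega\in(0,\frac12)$; $\mathcal{I}_{1/2}(P\|Q)\le\sqrt{\frac18\min\{D(P\|Q),D(Q\|P)\}}$; and $\mathcal{I}_\omega(P\|Q)\le(1-\omega)\,c_{\omega/(1-\omega)}\,D(Q\|P)$ for $\omega\in(\frac12,1)$; (iii) $\mathcal{I}_\omega(P\|Q)\le\omega-\frac12+\sqrt{\frac14-\omega(1-\omega)e^{-D(P\|Q)}}$ for $\omega\in(0,\frac12]$, and $\mathcal{I}_\omega(P\|Q)\le\frac12-\omega+\sqrt{\frac14-\omega(1-\omega)e^{-D(Q\|P)}}$ for $\omega\in(\frac12,1)$.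
   Context: For densities $p,q$ w.r.t. a dominating measure $\mu$: DeGroot statistical information $\mathcal{I}_\omega(P\|Q):=\int q\,\phi_\omega(p/q)\,\mathrm{d}\mu$ with $\phi_\omega(t)=\min\{\omega,1-\omega\}-\min\{\omega t,1-\omega\}$ (standard $f$-divergence conventions at $0$); $\chi^2(P\|Q):=\int\frac{(p-q)^2}{q}\,\mathrm{d}\mu$; $D(P\|Q):=\int p\ln\frac pq\,\mathrm{d}\mu$ (nats). For $\gamma>1$: $t_\gamma:=-\gamma\,W_{-1}\bigl(-\frac1\gamma e^{-1/\gamma}\bigr)$, where $W_{-1}$ is the branch of the Lambert $W$ function on $[-1/e,0)$ with values in $(-\infty,-1]$, and $c_\gamma:=\frac{t_\gamma-\gamma}{t_\gamma\ln t_\gamma+1-t_\gamma}$. *)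

theory Defs
  imports "HOL-Analysis.Analysis"
begin

text \<open>Densities p, q of P, Q w.r.t. a dominating measure mu.\<close>

definition is_density :: "'a measure \<Rightarrow> ('a \<Rightarrow> real) \<Rightarrow> bool" where
  "is_density M p \<longleftrightarrow> p \<in> borel_measurable M \<and> (\<forall>x\<in>space M. 0 \<le> p x)
      \<and> (\<integral>\<^sup>+ x. ennreal (p x) \<partial>M) = 1"

definition phi_deg :: "real \<Rightarrow> real \<Rightarrow> real" where
  "phi_deg \<omega> t = min \<omega> (1 - \<omega>) - min (\<omega> * t) (1 - \<omega>)"

text \<open>DeGroot statistical information. Conventions: 0 * phi(0/0) = 0 and
  0 * phi(a/0) = a * lim_{t->oo} phi(t)/t = 0 (phi is bounded).\<close>
definition deGroot :: "real \<Rightarrow> 'a measure \<Rightarrow> ('a \<Rightarrow> real) \<Rightarrow> ('a \<Rightarrow> real) \<Rightarrow> real" where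
  "deGroot \<omega> M p q = (\<integral>x. (if q x = 0 then 0 else q x * phi_deg \<omega> (p x / q x)) \<partial>M)"

text \<open>Chi-squared divergence, extended-real valued (value \<infinity> if P is not << Q).\<close>
definition chi2 :: "'a measure \<Rightarrow> ('a \<Rightarrow> real) \<Rightarrow> ('a \<Rightarrow> real) \<Rightarrow> ereal" where
  "chi2 M p q = enn2ereal (\<integral>\<^sup>+ x. (if q x = 0 then (if p x = 0 then 0 else \<infinity>)
                                   else ennreal ((p x - q x)\<^sup>2 / q x)) \<partial>M)"

text \<open>Relative entropy in nats, extended-real valued: integral of the positive part
  minus integral of the negative part of p ln(p/q), with 0 ln(0/q) = 0, p ln(p/0) = \<infinity>.\<close>
definition KL :: "'a measure \<Rightarrow> ('a \<Rightarrow> real) \<Rightarrow> ('a \<Rightarrow> real) \<Rightarrow> ereal" where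
  "KL M p q =
     enn2ereal (\<integral>\<^sup>+ x. (if p x = 0 then 0 else if q x = 0 then \<infinity>
                          else ennreal (p x * ln (p x / q x))) \<partial>M)
   - enn2ereal (\<integral>\<^sup>+ x. (if p x = 0 \<or> q x = 0 then 0
                          else ennreal (- (p x * ln (p x / q x)))) \<partial>M)"

definition lambertW_m1 :: "real \<Rightarrow> real" where
  "lambertW_m1 y = (THE w. w \<le> -1 \<and> w * exp w = y)"

definition t_gam :: "real \<Rightarrow> real" where
  "t_gam \<gamma> = - \<gamma> * lambertW_m1 (- (1 / \<gamma>) * exp (- 1 / \<gamma>))"

definition c_gam :: "real \<Rightarrow> real" where
  "c_gam \<gamma> = (t_gam \<gamma> - \<gamma>) / (t_gam \<gamma> * ln (t_gam \<gamma>) + 1 - t_gam \<gamma>)"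

definition esqrt :: "ereal \<Rightarrow> ereal" where
  "esqrt z = (case z of ereal r \<Rightarrow> ereal (sqrt r) | PInfty \<Rightarrow> \<infinity> | MInfty \<Rightarrow> -\<infinity>)"

definition expneg :: "ereal \<Rightarrow> real" where
  "expneg z = (case z of ereal r \<Rightarrow> exp (- r) | PInfty \<Rightarrow> 0 | MInfty \<Rightarrow> 0)"

definition ratio_chi :: "real \<Rightarrow> real \<Rightarrow> ereal \<Rightarrow> real" where
  "ratio_chi a w z = (case z of ereal r \<Rightarrow> a / (1 + w * r) | PInfty \<Rightarrow> 0 | MInfty \<Rightarrow> 0)"

end

theory Submission
  imports Defs "HOL-Probability.Hoeffding"
begin

text \<open>Everything is reduced to the minimal Bayes risk
  \<open>m = \<integral> min (\<omega> p) ((1 - \<omega>) q)\<close>: one has \<open>I\<^sub>\<omega> = min \<omega> (1 - \<omega>) - m\<close>, and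
  \<open>I\<^sub>\<omega>(P\<parallel>Q) = I\<^sub>1\<^sub>-\<^sub>\<omega>(Q\<parallel>P)\<close>, so it suffices to take \<open>\<omega> \<le> 1/2\<close>.
  Since \<open>(1/2 - m)\<^sup>2 = 1/4 - m (1 - m)\<close>, the bounds (i) and (iii) amount to lower bounds on
  \<open>m (1 - m)\<close>; these come from integrating the AM-GM inequality \<open>2 \<surd>(x y) \<le> c x + y / c\<close>
  pointwise and optimising over \<open>c\<close>. For (iii) this gives \<open>\<omega> (1 - \<omega>) BC\<^sup>2 \<le> m (1 - m)\<close>
  with the Bhattacharyya coefficient \<open>BC\<close>, and \<open>e\<^sup>-\<^sup>D \<le> BC\<^sup>2\<close>.
  The bounds (ii) come from the Donsker-Varadhan inequality
  \<open>D(P\<parallel>Q) \<ge> s P(A) - ln (1 + Q(A) (e\<^sup>s - 1))\<close> on the set \<open>A = {(1 - \<omega>) q < \<omega> p}\<close>: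
  with \<open>e\<^sup>s = t\<^sub>\<gamma>\<close> and \<open>ln (1 + x) \<le> x\<close> it yields the linear bound, and with Hoeffding's
  lemma it yields Pinsker's inequality at \<open>\<omega> = 1/2\<close>.\<close>

lemma is_densityD:
  assumes "is_density M p"
  shows "p \<in> borel_measurable M" "\<And>x. x \<in> space M \<Longrightarrow> 0 \<le> p x"
    and "integrable M p" "integral\<^sup>L M p = 1"
proof -
  show m: "p \<in> borel_measurable M" and nn: "\<And>x. x \<in> space M \<Longrightarrow> 0 \<le> p x"
    using assms unfolding is_density_def by auto
  have one: "(\<integral>\<^sup>+ x. ennreal (p x) \<partial>M) = 1"
    using assms unfolding is_density_def by auto
  show "integrable M p"
    by (rule integrableI_nonneg) (use m nn one in auto)
  have "integral\<^sup>L M p = enn2real (\<integral>\<^sup>+ x. ennreal (p x) \<partial>M)"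
    by (rule integral_eq_nn_integral) (use m nn in auto)
  then show "integral\<^sup>L M p = 1"
    using one by simp
qed

lemma integrable_if_pred:
  fixes f :: "'a \<Rightarrow> real"
  assumes "integrable M f" "Measurable.pred M P"
  shows "integrable M (\<lambda>x. if P x then f x else 0)"
proof (rule Bochner_Integration.integrable_bound[OF assms(1)])
  show "(\<lambda>x. if P x then f x else 0) \<in> borel_measurable M"
    using assms by measurable
qed (auto intro!: AE_I2)

subsection \<open>The minimal Bayes risk\<close>

definition bayes_risk :: "real \<Rightarrow> 'a measure \<Rightarrow> ('a \<Rightarrow> real) \<Rightarrow> ('a \<Rightarrow> real) \<Rightarrow> real" where
  "bayes_risk w M p q = (\<integral>x. min (w * p x) ((1 - w) * q x) \<partial>M)"

lemma bayes_risk_swap: "bayes_risk (1 - w) M q p = bayes_risk w M p q"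
  unfolding bayes_risk_def by (simp add: min.commute)

lemma integrable_min_densities:
  assumes dP: "is_density M p" and dQ: "is_density M q" and "0 < w" "w < 1"
  shows "integrable M (\<lambda>x. min (w * p x) ((1 - w) * q x))"
proof (rule Bochner_Integration.integrable_bound[where f = "\<lambda>x. w * p x"])
  show "integrable M (\<lambda>x. w * p x)"
    using is_densityD[OF dP] by auto
  show "(\<lambda>x. min (w * p x) ((1 - w) * q x)) \<in> borel_measurable M"
    using is_densityD(1)[OF dP] is_densityD(1)[OF dQ] by measurable
  show "AE x in M. norm (min (w * p x) ((1 - w) * q x)) \<le> norm (w * p x)"
    using is_densityD(2)[OF dP] is_densityD(2)[OF dQ] assms by (auto intro!: AE_I2)
qed

lemma bayes_risk_bounds:
  assumes dP: "is_density M p" and dQ: "is_density M q" and w0: "0 < w" and w1: "w < 1"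
  shows "0 \<le> bayes_risk w M p q" "bayes_risk w M p q \<le> w" "bayes_risk w M p q \<le> 1 - w"
proof -
  note I = integrable_min_densities[OF dP dQ w0 w1]
  note P = is_densityD[OF dP] and Q = is_densityD[OF dQ]
  show "0 \<le> bayes_risk w M p q"
    unfolding bayes_risk_def by (rule integral_nonneg_AE) (use P(2) Q(2) w0 w1 in auto)
  have "bayes_risk w M p q \<le> (\<integral>x. w * p x \<partial>M)"
    unfolding bayes_risk_def by (rule integral_mono_AE) (use I P in auto)
  then show "bayes_risk w M p q \<le> w"
    using P by simp
  have "bayes_risk w M p q \<le> (\<integral>x. (1 - w) * q x \<partial>M)"
    unfolding bayes_risk_def by (rule integral_mono_AE) (use I Q in auto)
  then show "bayes_risk w M p q \<le> 1 - w"
    using Q by simp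
qed

lemma deGroot_eq_bayes_risk:
  assumes dP: "is_density M p" and dQ: "is_density M q" and w0: "0 < w" and w1: "w < 1"
  shows "deGroot w M p q = min w (1 - w) - bayes_risk w M p q"
proof -
  note P = is_densityD[OF dP] and Q = is_densityD[OF dQ]
  have pointwise: "(if q x = 0 then 0 else q x * phi_deg w (p x / q x))
      = min w (1 - w) * q x - min (w * p x) ((1 - w) * q x)" if x: "x \<in> space M" for x
  proof (cases "q x = 0")
    case True
    then show ?thesis
      using P(2)[OF x] w0 by simp
  next
    case False
    then have "q x > 0"
      using Q(2)[OF x] by simp
    then have "q x * min (w * (p x / q x)) (1 - w) = min (w * p x) ((1 - w) * q x)"
      by (simp add: min_mult_distrib_left field_simps)
    then show ?thesis
      using False unfolding phi_deg_def by (simp add: algebra_simps)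
  qed
  have "deGroot w M p q = (\<integral>x. min w (1 - w) * q x - min (w * p x) ((1 - w) * q x) \<partial>M)"
    unfolding deGroot_def by (rule Bochner_Integration.integral_cong) (use pointwise in auto)
  also have "\<dots> = min w (1 - w) - bayes_risk w M p q"
    unfolding bayes_risk_def using integrable_min_densities[OF dP dQ w0 w1] Q by simp
  finally show ?thesis .
qed

lemma deGroot_swap:
  assumes dP: "is_density M p" and dQ: "is_density M q" and "0 < w" "w < 1"
  shows "deGroot (1 - w) M q p = deGroot w M p q"
  using deGroot_eq_bayes_risk[OF dP dQ] deGroot_eq_bayes_risk[OF dQ dP, of "1 - w"]
    bayes_risk_swap[of w M q p] assms by (simp add: min.commute)

lemma deGroot_nonneg:
  assumes dP: "is_density M p" and dQ: "is_density M q" and "0 < w" "w < 1"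
  shows "0 \<le> deGroot w M p q"
  using deGroot_eq_bayes_risk[OF assms] bayes_risk_bounds[OF assms] by simp

lemma weight_minus_bayes_risk:
  assumes dP: "is_density M p" and dQ: "is_density M q" and w0: "0 < w" and w1: "w < 1"
  shows "w - bayes_risk w M p q
    = w * (\<integral>x. (if (1 - w) * q x < w * p x then p x else 0) \<partial>M)
      - (1 - w) * (\<integral>x. (if (1 - w) * q x < w * p x then q x else 0) \<partial>M)"
proof -
  note P = is_densityD[OF dP] and Q = is_densityD[OF dQ]
  note [measurable] = P(1) Q(1)
  have A: "Measurable.pred M (\<lambda>x. (1 - w) * q x < w * p x)"
    by measurable
  have "w - bayes_risk w M p q = (\<integral>x. w * p x - min (w * p x) ((1 - w) * q x) \<partial>M)"
    unfolding bayes_risk_def using P integrable_min_densities[OF dP dQ w0 w1] by simp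
  also have "\<dots> = (\<integral>x. w * (if (1 - w) * q x < w * p x then p x else 0)
                      - (1 - w) * (if (1 - w) * q x < w * p x then q x else 0) \<partial>M)"
    by (rule Bochner_Integration.integral_cong) auto
  also have "\<dots> = w * (\<integral>x. (if (1 - w) * q x < w * p x then p x else 0) \<partial>M)
      - (1 - w) * (\<integral>x. (if (1 - w) * q x < w * p x then q x else 0) \<partial>M)"
    using integrable_if_pred[OF P(3) A] integrable_if_pred[OF Q(3) A] by simp
  finally show ?thesis .
qed

lemma deGroot_le_of_bayes_risk_variance:
  assumes dP: "is_density M p" and dQ: "is_density M q" and "0 < w" "w \<le> 1/2"
    and R: "R \<le> bayes_risk w M p q * (1 - bayes_risk w M p q)"
  shows "deGroot w M p q \<le> w - 1/2 + sqrt (1/4 - R)"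
proof -
  define m where "m = bayes_risk w M p q"
  have "(1/2 - m)\<^sup>2 \<le> 1/4 - R"
    using R by (simp add: m_def power2_eq_square algebra_simps)
  then have "1/2 - m \<le> sqrt (1/4 - R)"
    by (rule real_le_rsqrt)
  then show ?thesis
    using deGroot_eq_bayes_risk[OF dP dQ] assms by (simp add: m_def)
qed

lemma two_sqrt_mult_le:
  fixes x y c :: real
  assumes "0 \<le> x" "0 \<le> y" "0 < c"
  shows "2 * sqrt (x * y) \<le> c * x + y / c"
proof -
  have "sqrt ((c * x) * (y / c)) \<le> (c * x + y / c) / 2"
    by (rule arith_geo_mean_sqrt) (use assms in auto)
  then show ?thesis
    using assms by simp
qed

lemma sq_le_mult_of_forall_amgm:
  fixes x a b :: real
  assumes "0 \<le> x" "0 \<le> a" "0 \<le> b" and amgm: "\<And>c. 0 < c \<Longrightarrow> 2 * x \<le> c * a + b / c"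
  shows "x\<^sup>2 \<le> a * b"
proof (cases "x = 0")
  case True
  then show ?thesis
    using assms by simp
next
  case False
  then have x: "0 < x"
    using assms by simp
  have "a \<noteq> 0"
  proof
    assume "a = 0"
    then have "2 * x \<le> b / ((b + 1) / x)"
      using amgm[of "(b + 1) / x"] x assms by simp
    also have "\<dots> < x"
      using x assms by (simp add: field_simps)
    finally show False
      using x by simp
  qed
  then have a: "0 < a"
    using assms by simp
  have "2 * x \<le> x + b / (x / a)"
    using amgm[of "x / a"] x a by simp
  then have "x \<le> a * b / x"
    by (simp add: mult.commute)
  then show ?thesis
    using x by (simp add: field_simps power2_eq_square)
qed

subsection \<open>The Bhattacharyya coefficient\<close>

definition bhattacharyya :: "'a measure \<Rightarrow> ('a \<Rightarrow> real) \<Rightarrow> ('a \<Rightarrow> real) \<Rightarrow> real" where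
  "bhattacharyya M p q = (\<integral>x. sqrt (p x * q x) \<partial>M)"

lemma integrable_sqrt_mult_densities:
  assumes dP: "is_density M p" and dQ: "is_density M q"
  shows "integrable M (\<lambda>x. sqrt (p x * q x))"
proof (rule Bochner_Integration.integrable_bound[where f = "\<lambda>x. (p x + q x) / 2"])
  note P = is_densityD[OF dP] and Q = is_densityD[OF dQ]
  note [measurable] = P(1) Q(1)
  show "integrable M (\<lambda>x. (p x + q x) / 2)"
    using P Q by auto
  show "(\<lambda>x. sqrt (p x * q x)) \<in> borel_measurable M"
    by measurable
  show "AE x in M. norm (sqrt (p x * q x)) \<le> norm ((p x + q x) / 2)"
    using P(2) Q(2) arith_geo_mean_sqrt by (auto intro!: AE_I2)
qed

lemma bhattacharyya_nonneg:
  assumes "is_density M p" "is_density M q"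
  shows "0 \<le> bhattacharyya M p q"
  unfolding bhattacharyya_def
  by (rule integral_nonneg_AE) (use is_densityD(2)[OF assms(1)] is_densityD(2)[OF assms(2)] in auto)

lemma two_sqrt_mult_le_min:
  fixes u v c :: real
  assumes "0 \<le> u" "0 \<le> v" "0 < c"
  shows "2 * sqrt (u * v) \<le> c * min u v + (u + v - min u v) / c"
proof -
  have "u * v = min u v * max u v"
    by (cases "u \<le> v") (simp_all add: mult.commute)
  moreover have "max u v = u + v - min u v"
    by (simp add: min_def max_def)
  ultimately show ?thesis
    using two_sqrt_mult_le[of "min u v" "max u v" c] assms by simp
qed

lemma bhattacharyya_le_bayes_risk_variance:
  assumes dP: "is_density M p" and dQ: "is_density M q" and w0: "0 < w" and w1: "w < 1"
  shows "w * (1 - w) * (bhattacharyya M p q)\<^sup>2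
    \<le> bayes_risk w M p q * (1 - bayes_risk w M p q)"
proof -
  note P = is_densityD[OF dP] and Q = is_densityD[OF dQ]
  note IB = integrable_sqrt_mult_densities[OF dP dQ]
  note Im = integrable_min_densities[OF dP dQ w0 w1]
  define m where "m = bayes_risk w M p q"
  define x where "x = sqrt (w * (1 - w)) * bhattacharyya M p q"
  have "x\<^sup>2 \<le> m * (1 - m)"
  proof (rule sq_le_mult_of_forall_amgm)
    show "0 \<le> x"
      using bhattacharyya_nonneg[OF dP dQ] w0 w1 by (simp add: x_def)
    show "0 \<le> m" "0 \<le> 1 - m"
      using bayes_risk_bounds[OF dP dQ w0 w1] w1 by (simp_all add: m_def)
    fix c :: real
    assume c: "0 < c"
    have pointwise: "2 * (sqrt (w * (1 - w)) * sqrt (p y * q y))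
      \<le> c * min (w * p y) ((1 - w) * q y)
        + (w * p y + (1 - w) * q y - min (w * p y) ((1 - w) * q y)) / c"
      if y: "y \<in> space M" for y
      using two_sqrt_mult_le_min[of "w * p y" "(1 - w) * q y" c] P(2)[OF y] Q(2)[OF y] w0 w1 c
      by (simp add: real_sqrt_mult ac_simps)
    have "(\<integral>y. 2 * (sqrt (w * (1 - w)) * sqrt (p y * q y)) \<partial>M)
      \<le> (\<integral>y. c * min (w * p y) ((1 - w) * q y)
        + (w * p y + (1 - w) * q y - min (w * p y) ((1 - w) * q y)) / c \<partial>M)"
      by (rule integral_mono_AE) (use IB Im P Q pointwise in auto)
    then show "2 * x \<le> c * m + (1 - m) / c"
      using IB Im P Q unfolding x_def m_def bayes_risk_def bhattacharyya_def
      by (simp add: diff_divide_distrib add_divide_distrib)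
  qed
  then show ?thesis
    using w0 w1 unfolding x_def m_def by (simp add: power_mult_distrib)
qed

subsection \<open>The \<open>\<chi>\<^sup>2\<close>-divergence\<close>

lemma chi2_eq_ereal_integral:
  assumes [measurable]: "p \<in> borel_measurable M" "q \<in> borel_measurable M"
    and "\<And>x. x \<in> space M \<Longrightarrow> 0 \<le> q x" and chi: "chi2 M p q = ereal r"
  shows "AE x in M. q x = 0 \<longrightarrow> p x = 0"
    and "integrable M (\<lambda>x. if q x = 0 then 0 else (p x - q x)\<^sup>2 / q x)"
    and "(\<integral>x. (if q x = 0 then 0 else (p x - q x)\<^sup>2 / q x) \<partial>M) = r"
proof -
  define F where "F x = (if q x = 0 then (if p x = 0 then 0 else \<infinity>)
                         else ennreal ((p x - q x)\<^sup>2 / q x))" for x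
  define k where "k x = (if q x = 0 then 0 else (p x - q x)\<^sup>2 / q x)" for x
  have [measurable]: "F \<in> borel_measurable M" "k \<in> borel_measurable M"
    unfolding F_def k_def by measurable
  have k0: "0 \<le> k x" if "x \<in> space M" for x
    using assms(3)[OF that] by (simp add: k_def)
  have F: "(\<integral>\<^sup>+ x. F x \<partial>M) = ennreal r" "0 \<le> r"
    using chi unfolding chi2_def F_def[symmetric]
    by (cases "\<integral>\<^sup>+ x. F x \<partial>M" rule: ennreal_cases; simp)+
  have "AE x in M. F x \<noteq> \<infinity>"
    by (rule nn_integral_noteq_infinite) (use F in simp_all)
  then show AE: "AE x in M. q x = 0 \<longrightarrow> p x = 0"
    by eventually_elim (auto simp: F_def split: if_splits)
  have "AE x in M. F x = ennreal (k x)"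
    using AE by eventually_elim (auto simp: F_def k_def)
  then have nn: "(\<integral>\<^sup>+ x. ennreal (k x) \<partial>M) = ennreal r"
    using nn_integral_cong_AE F by fastforce
  show "integrable M (\<lambda>x. if q x = 0 then 0 else (p x - q x)\<^sup>2 / q x)"
    using integrableI_nonneg[of k M] k0 nn by (auto simp: k_def[abs_def])
  have "(\<integral>x. k x \<partial>M) = enn2real (\<integral>\<^sup>+ x. ennreal (k x) \<partial>M)"
    by (rule integral_eq_nn_integral) (use k0 in auto)
  then show "(\<integral>x. (if q x = 0 then 0 else (p x - q x)\<^sup>2 / q x) \<partial>M) = r"
    using nn F by (simp add: k_def)
qed

text \<open>The slack is \<open>(G (u + v) - min u v)\<^sup>2 / (u + v)\<close>; integrated with \<open>G\<close> the
  Bayes risk \<open>m\<close>, the second summand becomes \<open>m (1 - m)\<close>.\<close>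
lemma two_le_chi2_amgm:
  fixes u v c G :: real
  assumes u: "0 \<le> u" and v: "0 < v" and c: "0 < c"
  shows "2 * u \<le> c * (u + u\<^sup>2 / v) + (G\<^sup>2 * (u + v) + (1 - 2 * G) * min u v) / c"
proof -
  define S where "S = u + v"
  define n where "n = min u v"
  have S: "0 < S"
    using u v by (simp add: S_def)
  have "u + u\<^sup>2 / v = u * S / v"
    using v by (simp add: S_def field_simps power2_eq_square)
  then have "(u + u\<^sup>2 / v) * (u * v / S) = u\<^sup>2"
    using v S by (simp add: power2_eq_square)
  then have "2 * u = 2 * sqrt ((u + u\<^sup>2 / v) * (u * v / S))"
    using u by simp
  also have "\<dots> \<le> c * (u + u\<^sup>2 / v) + (u * v / S) / c"
    by (rule two_sqrt_mult_le) (use u v S c in auto)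
  also have "u * v / S \<le> G\<^sup>2 * S + (1 - 2 * G) * n"
  proof -
    have uv: "u * v = n * (S - n)"
      by (cases "u \<le> v") (auto simp: n_def S_def algebra_simps)
    have "(G\<^sup>2 * S + (1 - 2 * G) * n) * S - u * v = (G * S - n)\<^sup>2"
      unfolding uv by (simp add: algebra_simps power2_eq_square)
    then have "u * v \<le> (G\<^sup>2 * S + (1 - 2 * G) * n) * S"
      by (metis diff_ge_0_iff_ge zero_le_power2)
    then show ?thesis
      using S by (simp add: divide_le_eq)
  qed
  finally show ?thesis
    using c by (simp add: S_def n_def divide_right_mono)
qed

lemma chi2_nonneg: "0 \<le> chi2 M p q"
  unfolding chi2_def by simp

lemma bayes_risk_chi2_amgm:
  assumes dP: "is_density M p" and dQ: "is_density M q" and w0: "0 < w" and w1: "w < 1"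
    and chi: "chi2 M p q = ereal r" and c: "0 < c"
  shows "2 * w \<le> c * (w + w\<^sup>2 / (1 - w) * (r + 1))
    + bayes_risk w M p q * (1 - bayes_risk w M p q) / c"
proof -
  note P = is_densityD[OF dP] and Q = is_densityD[OF dQ]
  note Im = integrable_min_densities[OF dP dQ w0 w1]
  note chi_int = chi2_eq_ereal_integral[OF P(1) Q(1) Q(2) chi]
  define k where "k x = (if q x = 0 then 0 else (p x - q x)\<^sup>2 / q x)" for x
  have kI: "integrable M k" and kint: "(\<integral>x. k x \<partial>M) = r"
    using chi_int(2,3) by (simp_all add: k_def[abs_def])
  define m where "m = bayes_risk w M p q"
  define R where "R x = c * (w * p x + w\<^sup>2 / (1 - w) * (k x + 2 * p x - q x))
    + (m\<^sup>2 * (w * p x + (1 - w) * q x) + (1 - 2 * m) * min (w * p x) ((1 - w) * q x)) / c" for x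
  have pointwise: "2 * (w * p x) \<le> R x"
    if x: "x \<in> space M" and abs_cont: "q x = 0 \<longrightarrow> p x = 0" for x
  proof (cases "q x = 0")
    case True
    then show ?thesis
      using abs_cont by (simp add: R_def k_def)
  next
    case False
    then have qx: "0 < q x"
      using Q(2)[OF x] by simp
    have "w\<^sup>2 / (1 - w) * (k x + 2 * p x - q x) = (w * p x)\<^sup>2 / ((1 - w) * q x)"
      using w1 qx by (simp add: k_def field_simps power2_eq_square)
    moreover have "2 * (w * p x) \<le> c * (w * p x + (w * p x)\<^sup>2 / ((1 - w) * q x))
      + (m\<^sup>2 * (w * p x + (1 - w) * q x) + (1 - 2 * m) * min (w * p x) ((1 - w) * q x)) / c"
      by (rule two_le_chi2_amgm) (use P(2)[OF x] w0 w1 qx c in auto)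
    ultimately show ?thesis
      unfolding R_def by simp
  qed
  have RI: "integrable M R"
    unfolding R_def using P Q kI Im by auto
  have "(\<integral>x. 2 * (w * p x) \<partial>M) \<le> (\<integral>x. R x \<partial>M)"
  proof (rule integral_mono_AE)
    show "AE x in M. 2 * (w * p x) \<le> R x"
      using chi_int(1) by (rule AE_mp) (use pointwise in \<open>auto intro!: AE_I2\<close>)
  qed (use P RI in auto)
  also have "(\<integral>x. R x \<partial>M) = c * (w + w\<^sup>2 / (1 - w) * (r + 2 - 1))
      + (m\<^sup>2 * (w + (1 - w)) + (1 - 2 * m) * m) / c"
    unfolding R_def m_def bayes_risk_def
    using P Q kI Im kint by (simp add: diff_divide_distrib add_divide_distrib)
  also have "\<dots> = c * (w + w\<^sup>2 / (1 - w) * (r + 1)) + m * (1 - m) / c"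
    by (simp add: algebra_simps power2_eq_square)
  finally show ?thesis
    using P by (simp add: m_def)
qed

lemma chi2_le_bayes_risk_variance:
  assumes dP: "is_density M p" and dQ: "is_density M q" and w0: "0 < w" and w1: "w < 1"
    and chi: "chi2 M p q = ereal r"
  shows "w * (1 - w) \<le> bayes_risk w M p q * (1 - bayes_risk w M p q) * (1 + w * r)"
proof -
  have r: "0 \<le> r"
    using chi2_nonneg[of M p q] chi by simp
  define m where "m = bayes_risk w M p q"
  have m: "0 \<le> m" "m \<le> 1 - w"
    using bayes_risk_bounds[OF dP dQ w0 w1] by (simp_all add: m_def)
  define S where "S = w + w\<^sup>2 / (1 - w) * (r + 1)"
  have "w\<^sup>2 \<le> S * (m * (1 - m))"
    using bayes_risk_chi2_amgm[OF dP dQ w0 w1 chi] w0 w1 r m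
    by (intro sq_le_mult_of_forall_amgm) (simp_all add: S_def m_def)
  also have "S = w * (1 + w * r) / (1 - w)"
    using w1 by (simp add: S_def field_simps power2_eq_square)
  finally have "w * (w * (1 - w)) \<le> w * (m * (1 - m) * (1 + w * r))"
    using w1 by (simp add: field_simps power2_eq_square)
  then show ?thesis
    using w0 by (simp add: m_def)
qed

lemma ratio_chi_le_bayes_risk_variance:
  assumes dP: "is_density M p" and dQ: "is_density M q" and w0: "0 < w" and w1: "w < 1"
    and "w \<le> v"
  shows "ratio_chi (w * (1 - w)) v (chi2 M p q) \<le> bayes_risk w M p q * (1 - bayes_risk w M p q)"
proof (cases "chi2 M p q")
  case (real r)
  have r: "0 \<le> r"
    using chi2_nonneg[of M p q] real by simp
  have pos: "0 < 1 + w * r"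
    using w0 r by (simp add: add_pos_nonneg)
  have le: "1 + w * r \<le> 1 + v * r"
    using assms r by (simp add: mult_right_mono)
  then have "w * (1 - w) / (1 + v * r) \<le> w * (1 - w) / (1 + w * r)"
    by (rule divide_left_mono) (use w0 w1 pos le in \<open>auto intro!: mult_pos_pos\<close>)
  also have "\<dots> \<le> bayes_risk w M p q * (1 - bayes_risk w M p q)"
    using chi2_le_bayes_risk_variance[OF dP dQ w0 w1 real] pos by (simp add: divide_le_eq)
  finally show ?thesis
    using real by (simp add: ratio_chi_def)
qed (use bayes_risk_bounds[OF dP dQ w0 w1] in \<open>simp_all add: ratio_chi_def\<close>)

lemma deGroot_le_chi2:
  assumes dP: "is_density M p" and dQ: "is_density M q" and "0 < w" "w \<le> 1/2" "w \<le> v"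
  shows "deGroot w M p q \<le> w - 1/2 + sqrt (1/4 - ratio_chi (w * (1 - w)) v (chi2 M p q))"
  using assms ratio_chi_le_bayes_risk_variance[OF dP dQ, of w v]
  by (intro deGroot_le_of_bayes_risk_variance[OF dP dQ]) simp_all

subsection \<open>Variational lower bounds for the relative entropy\<close>

lemma mult_ln_div_ge:
  fixes p q l :: real
  assumes "0 < p" "0 < q" "0 < l"
  shows "p * ln l + p - l * q \<le> p * ln (p / q)"
proof -
  have "p * ln (l * q / p) \<le> p * (l * q / p - 1)"
    using assms by (intro mult_left_mono ln_le_minus_one) auto
  moreover have "ln (l * q / p) = ln l - ln (p / q)"
    using assms by (simp add: ln_div ln_mult)
  ultimately show ?thesis
    using assms by (simp add: algebra_simps)
qed

lemma ereal_diff_le_enn2ereal_diff: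
  fixes Xp Xn Hp Hn :: ennreal
  assumes "Xn + Hp \<le> Xp + Hn" "Xn < top" "Hp < top" "Hn < top"
  shows "ereal (enn2real Hp - enn2real Hn) \<le> enn2ereal Xp - enn2ereal Xn"
proof (cases "Xp = top")
  case True
  then show ?thesis
    using assms(2) by (cases Xn rule: ennreal_cases) auto
next
  case False
  then obtain a b c d where "Xp = ennreal a" "Xn = ennreal b" "Hp = ennreal c" "Hn = ennreal d"
     "0 \<le> a" "0 \<le> b" "0 \<le> c" "0 \<le> d"
    using assms(2-4) by (metis ennreal_cases less_top)
  then show ?thesis
    using assms(1) by (auto simp: ennreal_plus[symmetric] ennreal_le_iff simp del: ennreal_plus)
qed

lemma integrable_nn_integral_parts_finite:
  fixes h :: "'a \<Rightarrow> real"
  assumes "integrable M h"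
  shows "(\<integral>\<^sup>+ x. ennreal (h x) \<partial>M) < top" "(\<integral>\<^sup>+ x. ennreal (- h x) \<partial>M) < top"
proof -
  have "(\<integral>\<^sup>+ x. ennreal (h x) \<partial>M) \<le> (\<integral>\<^sup>+ x. ennreal (norm (h x)) \<partial>M)"
    "(\<integral>\<^sup>+ x. ennreal (- h x) \<partial>M) \<le> (\<integral>\<^sup>+ x. ennreal (norm (h x)) \<partial>M)"
    by (auto intro!: nn_integral_mono ennreal_leI)
  then show "(\<integral>\<^sup>+ x. ennreal (h x) \<partial>M) < top" "(\<integral>\<^sup>+ x. ennreal (- h x) \<partial>M) < top"
    using assms by (auto simp: integrable_iff_bounded intro: le_less_trans)
qed

text \<open>This is what makes \<open>KL\<close>, the difference of the integrals of the positive and the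
  negative part of \<open>p ln (p/q)\<close>, well defined: the negative part is at most \<open>q\<close>.\<close>
lemma KL_negative_part_finite:
  assumes dP: "is_density M p" and dQ: "is_density M q"
  shows "(\<integral>\<^sup>+ x. (if p x = 0 \<or> q x = 0 then 0 else ennreal (- (p x * ln (p x / q x)))) \<partial>M) < top"
proof -
  have "(if p x = 0 \<or> q x = 0 then 0 else ennreal (- (p x * ln (p x / q x)))) \<le> ennreal (q x)"
    if x: "x \<in> space M" for x
  proof (cases "p x = 0 \<or> q x = 0")
    case False
    then have "0 < p x" "0 < q x"
      using is_densityD(2)[OF dP x] is_densityD(2)[OF dQ x] by auto
    then have "- (p x * ln (p x / q x)) \<le> q x"
      using mult_ln_div_ge[of "p x" "q x" 1] by simp
    then show ?thesis
      using False by (simp add: ennreal_leI)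
  qed simp
  then have "(\<integral>\<^sup>+ x. (if p x = 0 \<or> q x = 0 then 0 else ennreal (- (p x * ln (p x / q x)))) \<partial>M)
      \<le> (\<integral>\<^sup>+ x. ennreal (q x) \<partial>M)"
    by (intro nn_integral_mono) auto
  then show ?thesis
    using dQ unfolding is_density_def by (simp add: le_less_trans)
qed

lemma integral_le_KL:
  assumes dP: "is_density M p" and dQ: "is_density M q" and hI: "integrable M h"
    and h_pos: "\<And>x. x \<in> space M \<Longrightarrow> 0 < p x \<Longrightarrow> 0 < q x \<Longrightarrow> h x \<le> p x * ln (p x / q x)"
    and h_zero: "\<And>x. x \<in> space M \<Longrightarrow> p x = 0 \<Longrightarrow> h x \<le> 0"
  shows "ereal (\<integral>x. h x \<partial>M) \<le> KL M p q"
proof -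
  note P = is_densityD[OF dP] and Q = is_densityD[OF dQ]
  note [measurable] = P(1) Q(1) borel_measurable_integrable[OF hI]
  define Fp where "Fp x = (if p x = 0 then 0 else if q x = 0 then \<infinity>
                          else ennreal (p x * ln (p x / q x)))" for x
  define Fn where "Fn x = (if p x = 0 \<or> q x = 0 then 0
                          else ennreal (- (p x * ln (p x / q x))))" for x
  have [measurable]: "Fp \<in> borel_measurable M" "Fn \<in> borel_measurable M"
    unfolding Fp_def Fn_def by measurable
  have pointwise: "Fn x + ennreal (h x) \<le> Fp x + ennreal (- h x)" if x: "x \<in> space M" for x
  proof -
    consider "p x = 0" | "0 < p x" "q x = 0" | "0 < p x" "0 < q x"
      using P(2)[OF x] Q(2)[OF x] by force
    then show ?thesis
    proof cases
      case 1
      then show ?thesis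
        using h_zero[OF x] by (simp add: Fp_def Fn_def ennreal_neg)
    next
      case 2
      then show ?thesis
        by (simp add: Fp_def Fn_def)
    next
      case 3
      then have "h x \<le> p x * ln (p x / q x)"
        by (rule h_pos[OF x])
      then show ?thesis
        using 3 by (cases "0 \<le> h x"; cases "0 \<le> p x * ln (p x / q x)")
          (auto simp: Fp_def Fn_def ennreal_neg ennreal_plus[symmetric] intro!: ennreal_leI)
    qed
  qed
  have "(\<integral>\<^sup>+ x. Fn x \<partial>M) + (\<integral>\<^sup>+ x. ennreal (h x) \<partial>M) = (\<integral>\<^sup>+ x. Fn x + ennreal (h x) \<partial>M)"
    by (rule nn_integral_add[symmetric]) auto
  also have "\<dots> \<le> (\<integral>\<^sup>+ x. Fp x + ennreal (- h x) \<partial>M)"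
    by (rule nn_integral_mono) (use pointwise in auto)
  also have "\<dots> = (\<integral>\<^sup>+ x. Fp x \<partial>M) + (\<integral>\<^sup>+ x. ennreal (- h x) \<partial>M)"
    by (rule nn_integral_add) auto
  finally have sum_le: "(\<integral>\<^sup>+ x. Fn x \<partial>M) + (\<integral>\<^sup>+ x. ennreal (h x) \<partial>M)
     \<le> (\<integral>\<^sup>+ x. Fp x \<partial>M) + (\<integral>\<^sup>+ x. ennreal (- h x) \<partial>M)" .
  have "ereal (\<integral>x. h x \<partial>M)
      = ereal (enn2real (\<integral>\<^sup>+ x. ennreal (h x) \<partial>M) - enn2real (\<integral>\<^sup>+ x. ennreal (- h x) \<partial>M))"
    using real_lebesgue_integral_def[OF hI] by simp
  also have "\<dots> \<le> KL M p q"
    unfolding KL_def Fp_def[symmetric] Fn_def[symmetric]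
    using KL_negative_part_finite[OF dP dQ, folded Fn_def] integrable_nn_integral_parts_finite[OF hI]
    by (intro ereal_diff_le_enn2ereal_diff[OF sum_le])
  finally show ?thesis .
qed

text \<open>A Donsker-Varadhan bound with the test function \<open>s\<close> on \<open>A\<close> and \<open>0\<close> elsewhere;
  the integrand \<open>h\<close> below is \<open>p ln l + p - l q\<close> for the tilted likelihood ratio \<open>l\<close>.\<close>
lemma KL_ge_tilt:
  assumes dP: "is_density M p" and dQ: "is_density M q"
    and A [measurable]: "Measurable.pred M A" and s: "0 \<le> s"
  shows "ereal (s * (\<integral>x. (if A x then p x else 0) \<partial>M)
      - ln (1 + (\<integral>x. (if A x then q x else 0) \<partial>M) * (exp s - 1))) \<le> KL M p q"
proof -
  note P = is_densityD[OF dP] and Q = is_densityD[OF dQ]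
  define a where "a = (\<integral>x. (if A x then p x else 0) \<partial>M)"
  define b where "b = (\<integral>x. (if A x then q x else 0) \<partial>M)"
  note IA = integrable_if_pred[OF P(3) A] and IB = integrable_if_pred[OF Q(3) A]
  have "0 \<le> b"
    unfolding b_def by (rule integral_nonneg_AE) (use Q(2) in auto)
  define Z where "Z = 1 + b * (exp s - 1)"
  have Z: "0 < Z"
    using \<open>0 \<le> b\<close> s by (simp add: Z_def add_pos_nonneg)
  define l where "l x = (if A x then exp s else 1) / Z" for x
  define h where "h x = s * (if A x then p x else 0) - ln Z * p x + p x
      - (q x + (exp s - 1) * (if A x then q x else 0)) / Z" for x
  have h_eq: "h x = p x * ln (l x) + p x - l x * q x" for x
    using Z by (cases "A x") (simp_all add: h_def l_def ln_div field_simps)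
  have hI: "integrable M h"
    unfolding h_def using IA IB P Q by auto
  have "(\<integral>x. h x \<partial>M) = s * a - ln Z + 1 - (1 + (exp s - 1) * b) / Z"
    unfolding h_def a_def b_def using IA IB P Q by simp
  also have "\<dots> = s * a - ln Z"
    using Z by (simp add: Z_def algebra_simps)
  finally have "(\<integral>x. h x \<partial>M) = s * a - ln Z" .
  moreover have "ereal (\<integral>x. h x \<partial>M) \<le> KL M p q"
  proof (rule integral_le_KL[OF dP dQ hI])
    fix x
    assume "0 < p x" "0 < q x"
    moreover have "0 < l x"
      using Z by (simp add: l_def)
    ultimately show "h x \<le> p x * ln (p x / q x)"
      unfolding h_eq by (rule mult_ln_div_ge)
  next
    fix x
    assume "x \<in> space M" "p x = 0"
    then show "h x \<le> 0"
      using Q(2) Z by (simp add: h_eq l_def)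
  qed
  ultimately show ?thesis
    by (simp add: a_def b_def Z_def)
qed

lemma KL_nonneg:
  assumes "is_density M p" "is_density M q"
  shows "0 \<le> KL M p q"
  using KL_ge_tilt[OF assms, of "\<lambda>_. False" 0] by (simp add: zero_ereal_def)

text \<open>Pinsker's inequality: the tilt bound on the set \<open>{q < p}\<close> with \<open>s = 4 (P(A) - Q(A))\<close>,
  combined with Hoeffding's lemma.\<close>
lemma pinsker_deGroot:
  assumes dP: "is_density M p" and dQ: "is_density M q"
  shows "ereal (8 * (deGroot (1/2) M p q)\<^sup>2) \<le> KL M p q"
proof -
  note P = is_densityD[OF dP] and Q = is_densityD[OF dQ]
  note [measurable] = P(1) Q(1)
  define A where "A x \<longleftrightarrow> (1 - 1/2) * q x < 1/2 * p x" for x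
  have A_meas: "Measurable.pred M A"
    unfolding A_def by measurable
  define a where "a = (\<integral>x. (if A x then p x else 0) \<partial>M)"
  define b where "b = (\<integral>x. (if A x then q x else 0) \<partial>M)"
  have "0 \<le> b"
    unfolding b_def by (rule integral_nonneg_AE) (use Q(2) in auto)
  have dG: "deGroot (1/2) M p q = (a - b) / 2"
    using deGroot_eq_bayes_risk[OF dP dQ, of "1/2"] weight_minus_bayes_risk[OF dP dQ, of "1/2"]
    unfolding a_def b_def A_def by simp
  have "0 \<le> a - b"
    using deGroot_nonneg[OF dP dQ, of "1/2"] dG by simp
  define s where "s = 4 * (a - b)"
  have "0 \<le> s"
    using \<open>0 \<le> a - b\<close> by (simp add: s_def)
  have "- s * b + ln (1 + b * (exp s - 1)) \<le> s\<^sup>2 / 8"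
    by (rule Hoeffdings_lemma_aux) (use \<open>0 \<le> s\<close> \<open>0 \<le> b\<close> in simp_all)
  moreover have "8 * (deGroot (1/2) M p q)\<^sup>2 = s * a - s * b - s\<^sup>2 / 8"
    unfolding dG s_def by (simp add: power2_eq_square field_simps)
  ultimately have "8 * (deGroot (1/2) M p q)\<^sup>2 \<le> s * a - ln (1 + b * (exp s - 1))"
    by simp
  also have "ereal \<dots> \<le> KL M p q"
    unfolding a_def b_def by (rule KL_ge_tilt[OF dP dQ A_meas \<open>0 \<le> s\<close>])
  finally show ?thesis
    by simp
qed

lemma KL_ge_bhattacharyya_family:
  assumes dP: "is_density M p" and dQ: "is_density M q" and \<beta>: "0 < \<beta>"
  shows "ereal (2 - 2 * ln \<beta> - 2 * bhattacharyya M p q / \<beta>) \<le> KL M p q"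
proof -
  note P = is_densityD[OF dP]
  note IB = integrable_sqrt_mult_densities[OF dP dQ]
  define h where "h x = 2 * p x - 2 * ln \<beta> * p x - 2 * sqrt (p x * q x) / \<beta>" for x
  have hI: "integrable M h"
    unfolding h_def using IB P by auto
  have "(\<integral>x. h x \<partial>M) = 2 - 2 * ln \<beta> - 2 * bhattacharyya M p q / \<beta>"
    unfolding h_def bhattacharyya_def using IB P by simp
  moreover have "ereal (\<integral>x. h x \<partial>M) \<le> KL M p q"
  proof (rule integral_le_KL[OF dP dQ hI])
    fix x
    assume px: "0 < p x" and qx: "0 < q x"
    define l where "l = sqrt (p x / q x) / \<beta>"
    have "0 < l"
      using px qx \<beta> by (simp add: l_def)
    then have "p x * ln l + p x - l * q x \<le> p x * ln (p x / q x)"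
      by (rule mult_ln_div_ge[OF px qx])
    moreover have "ln l = ln (p x / q x) / 2 - ln \<beta>"
      using px qx \<beta> by (simp add: l_def ln_div ln_sqrt)
    moreover have "l * q x = sqrt (p x * q x) / \<beta>"
    proof -
      have "p x / q x = (p x * q x) / (q x)\<^sup>2"
        using qx by (simp add: power2_eq_square)
      then have "sqrt (p x / q x) = sqrt (p x * q x) / q x"
        using qx by (simp add: real_sqrt_divide)
      then show ?thesis
        using qx by (simp add: l_def)
    qed
    ultimately show "h x \<le> p x * ln (p x / q x)"
      unfolding h_def by (simp add: field_simps)
  qed (simp add: h_def)
  ultimately show ?thesis
    by simp
qed

lemma expneg_KL_le_bhattacharyya:
  assumes dP: "is_density M p" and dQ: "is_density M q"
  shows "expneg (KL M p q) \<le> (bhattacharyya M p q)\<^sup>2"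
proof (cases "KL M p q")
  case (real r)
  define B where "B = bhattacharyya M p q"
  have "0 \<le> r"
    using KL_nonneg[OF dP dQ] real by simp
  have "0 < B"
  proof (rule ccontr)
    assume "\<not> 0 < B"
    then have "B = 0"
      using bhattacharyya_nonneg[OF dP dQ] by (simp add: B_def)
    then show False
      using KL_ge_bhattacharyya_family[OF dP dQ, of "exp (- r)"] real \<open>0 \<le> r\<close> by (simp add: B_def)
  qed
  then have "- r \<le> 2 * ln B"
    using KL_ge_bhattacharyya_family[OF dP dQ \<open>0 < B\<close>] real by (simp add: B_def)
  also have "2 * ln B = ln (B\<^sup>2)"
    using \<open>0 < B\<close> by (simp add: ln_realpow)
  finally have "exp (- r) \<le> exp (ln (B\<^sup>2))"
    by simp
  also have "\<dots> = B\<^sup>2"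
    using \<open>0 < B\<close> by simp
  finally show ?thesis
    using real by (simp add: expneg_def B_def)
next
  case MInf
  then show ?thesis
    using KL_nonneg[OF dP dQ] by simp
qed (simp add: expneg_def)

lemma deGroot_le_KL_exp:
  assumes dP: "is_density M p" and dQ: "is_density M q" and w0: "0 < w" and w: "w \<le> 1/2"
  shows "deGroot w M p q \<le> w - 1/2 + sqrt (1/4 - w * (1 - w) * expneg (KL M p q))"
proof (rule deGroot_le_of_bayes_risk_variance[OF dP dQ w0 w])
  have "w * (1 - w) * expneg (KL M p q) \<le> w * (1 - w) * (bhattacharyya M p q)\<^sup>2"
    using expneg_KL_le_bhattacharyya[OF dP dQ] w0 w by (intro mult_left_mono) simp_all
  also have "\<dots> \<le> bayes_risk w M p q * (1 - bayes_risk w M p q)"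
    using bhattacharyya_le_bayes_risk_variance[OF dP dQ w0] w by simp
  finally show "w * (1 - w) * expneg (KL M p q) \<le> bayes_risk w M p q * (1 - bayes_risk w M p q)" .
qed

subsection \<open>The constant \<open>c\<^sub>\<gamma>\<close>\<close>

lemma ln_fixed_point_gap_strict_decreasing:
  fixes g s t :: real
  assumes g: "1 < g" and "g \<le> s" "s < t"
  shows "g * ln t - t < g * ln s - s"
proof -
  have s: "0 < s"
    using assms by linarith
  have "ln (1 + (t / s - 1)) < t / s - 1"
    using assms s by (intro ln_add_one_self_less_self) simp
  then have "ln t - ln s < (t - s) / s"
    using assms s by (simp add: ln_div diff_divide_distrib)
  also have "\<dots> \<le> (t - s) / g"
    using assms by (intro divide_left_mono) auto
  finally show ?thesis
    using g by (simp add: field_simps)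
qed

lemma ln_fixed_point_unique:
  fixes g s t :: real
  assumes g: "1 < g" and "g \<le> s" "g \<le> t" "g * ln s = s - 1" "g * ln t = t - 1"
  shows "s = t"
proof (cases s t rule: linorder_cases)
  case less
  then show ?thesis
    using ln_fixed_point_gap_strict_decreasing[OF g \<open>g \<le> s\<close> less] assms by simp
next
  case greater
  then show ?thesis
    using ln_fixed_point_gap_strict_decreasing[OF g \<open>g \<le> t\<close> greater] assms by simp
qed

lemma exists_ln_fixed_point:
  fixes g :: real
  assumes g: "1 < g"
  shows "\<exists>t>g. g * ln t = t - 1"
proof -
  define h where "h t = g * ln t - t + 1" for t
  define T where "T = (2 * g + 1)\<^sup>2"
  have "(g - 1) / (1 + (g - 1)) < ln (g - 1 + 1)"
    using g by (intro ln_add1_gt) simp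
  then have hg: "0 < h g"
    using g by (simp add: h_def field_simps)
  have "ln (2 * g + 1) < 2 * g + 1"
    using g by simp
  have "ln T = 2 * ln (2 * g + 1)"
    using g by (simp add: T_def ln_realpow)
  also have "\<dots> < 2 * (2 * g + 1)"
    using \<open>ln (2 * g + 1) < 2 * g + 1\<close> by (rule mult_strict_left_mono) simp
  finally have hT: "h T < 0"
    using g mult_strict_left_mono[of "ln T" "2 * (2 * g + 1)" g]
    by (simp add: h_def T_def power2_eq_square algebra_simps)
  have "g \<le> T"
    using g by (simp add: T_def power2_eq_square algebra_simps)
  then have "\<exists>t\<ge>g. t \<le> T \<and> h t = 0"
    using hT hg g by (intro IVT2) (auto simp: h_def intro!: continuous_intros)
  then obtain t where "g \<le> t" "h t = 0"
    by blast
  moreover have "t \<noteq> g"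
    using hg \<open>h t = 0\<close> by auto
  ultimately have "g < t" "g * ln t = t - 1"
    by (auto simp: h_def)
  then show ?thesis
    by blast
qed

text \<open>\<open>t_gam \<gamma>\<close> is the root above \<open>\<gamma>\<close> of \<open>\<gamma> ln t = t - 1\<close>: substituting \<open>w = -t/\<gamma>\<close>
  turns this equation into \<open>w e\<^sup>w = -(1/\<gamma>) e\<^sup>-\<^sup>1\<^sup>/\<^sup>\<gamma>\<close>.\<close>
lemma lambertW_m1_eq_ln_fixed_point:
  fixes g t :: real
  assumes g: "1 < g" and t: "g < t" "g * ln t = t - 1"
  shows "lambertW_m1 (- (1 / g) * exp (- 1 / g)) = - t / g"
  unfolding lambertW_m1_def
proof (rule the_equality)
  have "ln t = (t - 1) / g"
    using t g by (simp add: field_simps)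
  moreover have "exp (ln t) = t"
    using t g by simp
  ultimately have "t = exp ((t - 1) / g)"
    by simp
  then have "t * exp (- t / g) = exp ((t - 1) / g + - t / g)"
    by (metis exp_add)
  also have "(t - 1) / g + - t / g = - 1 / g"
    using g by (simp add: field_simps)
  finally show "- t / g \<le> -1 \<and> - t / g * exp (- t / g) = - (1 / g) * exp (- 1 / g)"
    using g t by (simp add: field_simps)
next
  fix w
  assume w: "w \<le> -1 \<and> w * exp w = - (1 / g) * exp (- 1 / g)"
  define s where "s = - g * w"
  have "g \<le> s"
    using w g mult_left_mono[of 1 "- w" g] by (simp add: s_def)
  have w_eq: "w = - s / g"
    using g by (simp add: s_def)
  have "s * exp (- s / g) = exp (- 1 / g)"
    using w g unfolding w_eq by (simp add: field_simps)
  then have "ln (s * exp (- s / g)) = - 1 / g"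
    by simp
  then have "ln s - s / g = - 1 / g"
    using \<open>g \<le> s\<close> g by (simp add: ln_mult)
  then have "g * (ln s - s / g) = g * (- 1 / g)"
    by simp
  then have s_fix: "g * ln s = s - 1"
    using g by (simp add: right_diff_distrib)
  have "s = t"
    using ln_fixed_point_unique[OF g \<open>g \<le> s\<close> _ s_fix] t by simp
  then show "w = - t / g"
    using w_eq by simp
qed

lemma t_gam_ln_fixed_point:
  fixes g :: real
  assumes g: "1 < g"
  shows "g < t_gam g" "t_gam g - 1 = g * ln (t_gam g)"
proof -
  obtain t where t: "g < t" "g * ln t = t - 1"
    using exists_ln_fixed_point[OF g] by blast
  have "t_gam g = t"
    unfolding t_gam_def lambertW_m1_eq_ln_fixed_point[OF g t] using g by simp
  then show "g < t_gam g" "t_gam g - 1 = g * ln (t_gam g)"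
    using t by simp_all
qed

lemma c_gam_eq_inverse_ln:
  fixes g :: real
  assumes g: "1 < g"
  shows "c_gam g = 1 / ln (t_gam g)" "0 < ln (t_gam g)"
proof -
  note t = t_gam_ln_fixed_point[OF g]
  show "0 < ln (t_gam g)"
    using t g by simp
  have "t_gam g * ln (t_gam g) + 1 - t_gam g = (t_gam g - g) * ln (t_gam g)"
    using t(2) by (simp add: algebra_simps)
  then show "c_gam g = 1 / ln (t_gam g)"
    using t(1) \<open>0 < ln (t_gam g)\<close> unfolding c_gam_def by simp
qed

text \<open>The tilt bound on the set where the Bayes test decides for P, with \<open>e\<^sup>s = t_gam\<close>.\<close>
lemma deGroot_le_KL_linear:
  assumes dP: "is_density M p" and dQ: "is_density M q" and w0: "0 < w" and w: "w < 1/2"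
  shows "ereal (deGroot w M p q) \<le> ereal (w * c_gam ((1 - w) / w)) * KL M p q"
proof -
  note P = is_densityD[OF dP] and Q = is_densityD[OF dQ]
  note [measurable] = P(1) Q(1)
  define g where "g = (1 - w) / w"
  have g: "1 < g"
    using w0 w by (simp add: g_def field_simps)
  define t where "t = t_gam g"
  define L where "L = ln t"
  have t: "t - 1 = g * L" "exp L = t" and L: "0 < L" and c: "c_gam g = 1 / L"
    using t_gam_ln_fixed_point[OF g] c_gam_eq_inverse_ln[OF g] g by (simp_all add: t_def L_def)
  define A where "A x \<longleftrightarrow> (1 - w) * q x < w * p x" for x
  have A_meas: "Measurable.pred M A"
    unfolding A_def by measurable
  define a where "a = (\<integral>x. (if A x then p x else 0) \<partial>M)"
  define b where "b = (\<integral>x. (if A x then q x else 0) \<partial>M)"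
  have "0 \<le> b"
    unfolding b_def by (rule integral_nonneg_AE) (use Q(2) in auto)
  have "deGroot w M p q = w - bayes_risk w M p q"
    using deGroot_eq_bayes_risk[OF dP dQ w0] w by simp
  also have "\<dots> = w * a - (1 - w) * b"
    using weight_minus_bayes_risk[OF dP dQ w0] w unfolding a_def b_def A_def by simp
  also have "(1 - w) = w * g"
    using w0 by (simp add: g_def)
  finally have dG: "deGroot w M p q = w * (a - g * b)"
    by (simp add: algebra_simps)
  have "L * (a - g * b) \<le> L * a - ln (1 + b * (exp L - 1))"
  proof -
    have "ln (1 + b * (exp L - 1)) \<le> b * (exp L - 1)"
      using \<open>0 \<le> b\<close> L by (intro ln_add_one_self_le_self) simp
    then show ?thesis
      unfolding t by (simp add: algebra_simps)
  qed
  also have "ereal \<dots> \<le> KL M p q"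
    unfolding a_def b_def by (rule KL_ge_tilt[OF dP dQ A_meas]) (use L in simp)
  finally have "ereal (L * (a - g * b)) \<le> KL M p q"
    by simp
  then have "ereal (w * c_gam g) * ereal (L * (a - g * b)) \<le> ereal (w * c_gam g) * KL M p q"
    using w0 L c by (intro ereal_mult_left_mono) simp_all
  moreover have "w * c_gam g * (L * (a - g * b)) = deGroot w M p q"
    using dG c L by simp
  ultimately show ?thesis
    by (simp add: g_def)
qed

lemma ereal_le_esqrt:
  fixes x :: real
  assumes "0 \<le> x" "ereal (8 * x\<^sup>2) \<le> D"
  shows "ereal x \<le> esqrt (D / 8)"
proof (cases D)
  case (real d)
  then have "x\<^sup>2 \<le> d / 8"
    using assms by simp
  then show ?thesis
    using real by (simp add: esqrt_def real_le_rsqrt)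
qed (use assms in \<open>simp_all add: esqrt_def\<close>)

theorem theorem7:
  fixes M :: "'a measure" and p q :: "'a \<Rightarrow> real" and \<omega> :: real
  assumes dP: "is_density M p" and dQ: "is_density M q"
    and w0: "0 < \<omega>" and w1: "\<omega> < 1"
  shows
   "(\<omega> \<le> 1/2 \<longrightarrow> deGroot \<omega> M p q
        \<le> \<omega> - 1/2 + sqrt (1/4 - ratio_chi (\<omega> * (1 - \<omega>)) \<omega> (chi2 M p q)))
  \<and> (1/2 < \<omega> \<longrightarrow> deGroot \<omega> M p q
        \<le> 1/2 - \<omega> + sqrt (1/4 - ratio_chi (\<omega> * (1 - \<omega>)) \<omega> (chi2 M q p)))
  \<and> (\<omega> < 1/2 \<longrightarrow> ereal (deGroot \<omega> M p q)
        \<le> ereal (\<omega> * c_gam ((1 - \<omega>) / \<omega>)) * KL M p q)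
  \<and> (\<omega> = 1/2 \<longrightarrow> ereal (deGroot \<omega> M p q)
        \<le> esqrt (min (KL M p q) (KL M q p) / 8))
  \<and> (1/2 < \<omega> \<longrightarrow> ereal (deGroot \<omega> M p q)
        \<le> ereal ((1 - \<omega>) * c_gam (\<omega> / (1 - \<omega>))) * KL M q p)
  \<and> (\<omega> \<le> 1/2 \<longrightarrow> deGroot \<omega> M p q
        \<le> \<omega> - 1/2 + sqrt (1/4 - \<omega> * (1 - \<omega>) * expneg (KL M p q)))
  \<and> (1/2 < \<omega> \<longrightarrow> deGroot \<omega> M p q
        \<le> 1/2 - \<omega> + sqrt (1/4 - \<omega> * (1 - \<omega>) * expneg (KL M q p)))"
proof -
  have w0': "0 < 1 - \<omega>"
    using w1 by simp
  consider (below) "\<omega> < 1/2" | (half) "\<omega> = 1/2" | (above) "1/2 < \<omega>"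
    by linarith
  then show ?thesis
  proof cases
    case below
    then show ?thesis
      using deGroot_le_chi2[OF dP dQ w0 _ order_refl] deGroot_le_KL_linear[OF dP dQ w0]
        deGroot_le_KL_exp[OF dP dQ w0] by simp
  next
    case half
    have "ereal (deGroot (1/2) M p q) \<le> esqrt (min (KL M p q) (KL M q p) / 8)"
      using pinsker_deGroot[OF dP dQ] pinsker_deGroot[OF dQ dP] deGroot_swap[OF dP dQ, of "1/2"]
      by (intro ereal_le_esqrt deGroot_nonneg[OF dP dQ]) simp_all
    then show ?thesis
      using deGroot_le_chi2[OF dP dQ, of "1/2" "1/2"] deGroot_le_KL_exp[OF dP dQ, of "1/2"]
      unfolding half by simp
  next
    case above
    have "deGroot \<omega> M p q = deGroot (1 - \<omega>) M q p"
      using deGroot_swap[OF dP dQ w0 w1] by simp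
    then show ?thesis
      using above deGroot_le_chi2[OF dQ dP w0', of \<omega>] deGroot_le_KL_linear[OF dQ dP w0']
        deGroot_le_KL_exp[OF dQ dP w0'] by (simp add: mult.commute)
  qed
qed

end
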